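(* If $\lambda>\operatorname{cf}(\lambda)=\omega$, then $\mathfrak{r}_\lambda\le\mathfrak{i}_\lambda$.
   Context: For $\mathcal{A}\subseteq[\lambda]^\lambda$, $\operatorname{comb}(\mathcal{A})$ is the set of all sets $\bigcap\Gamma-\bigcup\Delta$ with $\Gamma,\Delta\in[\mathcal{A}]^{<\omega}$, $\Gamma\cap\Delta=\varnothing$. $\mathcal{A}$ is independent iff $\operatorname{comb}(\mathcal{A})\subseteq[\lambda]^\lambda$; $\mathfrak{i}_\lambda$ is the minimal size of a maximal independent family in $[\lambda]^\lambda$. A set $S$ splits $B\in[\lambda]^\lambda$ if $|B\cap S|=|B-S|=\lambda$. A family $\mathcal{A}\subseteq[\lambda]^\lambda$ is unsplittable if no single $S\in[\lambda]^\lambda$ splits every member of $\mathcal{A}$; the reaping number $\mathfrak{r}_\lambda$ is the minimal size of an unsplittable family in $[\lambda]^\lambda$. *)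

theory Defs
  imports "HOL-Library.Equipollence" "HOL-Library.Countable_Set"
begin

text \<open>The cardinal lambda is represented by a set L of cardinality lambda.
  full_subsets L is [lambda]^lambda: subsets of L of the same cardinality as L.\<close>

definition full_subsets :: "'a set \<Rightarrow> 'a set set" where
  "full_subsets L = {B. B \<subseteq> L \<and> B \<approx> L}"

definition comb :: "'a set \<Rightarrow> 'a set set \<Rightarrow> 'a set set" where
  "comb L \<A> = {(L \<inter> \<Inter>\<Gamma>) - \<Union>\<Delta> | \<Gamma> \<Delta>.
      \<Gamma> \<subseteq> \<A> \<and> \<Delta> \<subseteq> \<A> \<and> finite \<Gamma> \<and> finite \<Delta> \<and> \<Gamma> \<inter> \<Delta> = {}}"

definition independent :: "'a set \<Rightarrow> 'a set set \<Rightarrow> bool" where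
  "independent L \<A> \<longleftrightarrow> \<A> \<subseteq> full_subsets L \<and> comb L \<A> \<subseteq> full_subsets L"

definition maximal_independent :: "'a set \<Rightarrow> 'a set set \<Rightarrow> bool" where
  "maximal_independent L \<A> \<longleftrightarrow> independent L \<A> \<and>
     (\<forall>\<B>. independent L \<B> \<and> \<A> \<subseteq> \<B> \<longrightarrow> \<B> = \<A>)"

definition splits :: "'a set \<Rightarrow> 'a set \<Rightarrow> 'a set \<Rightarrow> bool" where
  "splits L S B \<longleftrightarrow> (B \<inter> S) \<approx> L \<and> (B - S) \<approx> L"

definition unsplittable :: "'a set \<Rightarrow> 'a set set \<Rightarrow> bool" where
  "unsplittable L \<A> \<longleftrightarrow> \<A> \<subseteq> full_subsets L \<and>
     \<not> (\<exists>S \<in> full_subsets L. \<forall>B \<in> \<A>. splits L S B)"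

text \<open>cf(|L|) = omega for infinite L: L is a countable union of sets of size < |L|.\<close>

definition cf_omega :: "'a set \<Rightarrow> bool" where
  "cf_omega L \<longleftrightarrow> infinite L \<and>
     (\<exists>A :: nat \<Rightarrow> 'a set. (\<forall>n. A n \<subseteq> L \<and> A n \<prec> L) \<and> (\<Union>n. A n) = L)"

end

theory Submission
  imports Defs "HOL-Algebra.Free_Abelian_Groups"
begin

text \<open>The Boolean combinations of a maximal independent family \<open>\<I>\<close> form an unsplittable
  family: a set splitting all of them either belongs to \<open>\<I>\<close>, and then fails to split itself,
  or could be added to \<open>\<I>\<close> without destroying independence. A finite independent family has
  finitely many atoms, and a set halving each of them splits all its Boolean combinations; so
  \<open>\<I>\<close> is infinite and has as many Boolean combinations as members. The argument works for every
  infinite \<open>L\<close>.\<close>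

lemma infinite_times_self_eqpoll: "infinite A \<Longrightarrow> A \<times> A \<approx> A"
  by (simp add: eqpoll_iff_card_of_ordIso card_of_Times_same_infinite)

lemma eqpoll_if_between:
  assumes "X \<subseteq> C" "C \<subseteq> L" "X \<approx> L"
  shows "C \<approx> L"
proof (rule lepoll_antisym)
  show "C \<lesssim> L" using assms(2) by (rule subset_imp_lepoll)
  have "L \<lesssim> X" using assms(3) by (simp add: eqpoll_imp_lepoll eqpoll_sym)
  also have "X \<lesssim> C" using assms(1) by (rule subset_imp_lepoll)
  finally show "L \<lesssim> C" .
qed

lemma infinite_split_eqpoll:
  assumes "infinite X"
  shows "\<exists>Y \<subseteq> X. Y \<approx> X \<and> X - Y \<approx> X"
proof -
  obtain a where "a \<in> X" using assms infinite_imp_nonempty by blast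
  moreover obtain b where "b \<in> X - {a}"
    using assms infinite_imp_nonempty[of "X - {a}"] by auto
  ultimately have ab: "a \<in> X" "b \<in> X" "a \<noteq> b" by auto
  obtain g where g: "bij_betw g (X \<times> X) X"
    using infinite_times_self_eqpoll[OF assms] by (auto simp: eqpoll_def)
  then have inj: "inj_on g (X \<times> X)" and gX: "g ` (X \<times> X) = X"
    by (auto simp: bij_betw_def)
  have slice: "g ` (X \<times> {c}) \<approx> X" if "c \<in> X" for c
  proof -
    have "g ` (X \<times> {c}) \<approx> X \<times> {c}"
      by (rule inj_on_image_eqpoll_self, rule inj_on_subset[OF inj]) (use that in auto)
    also have "X \<times> {c} \<approx> X"
      by (rule eqpoll_trans[OF times_commute_eqpoll times_singleton_eqpoll])
    finally show ?thesis .
  qed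
  define Y where "Y = g ` (X \<times> {a})"
  have "Y \<approx> X" unfolding Y_def using ab(1) by (rule slice)
  have "Y \<subseteq> X" unfolding Y_def using gX ab by auto
  have "g ` (X \<times> {b}) \<subseteq> X - Y"
  proof
    fix z assume "z \<in> g ` (X \<times> {b})"
    then obtain x where x: "x \<in> X" "z = g (x, b)" by blast
    have "z \<notin> Y"
    proof
      assume "z \<in> Y"
      then obtain y where "y \<in> X" "z = g (y, a)" unfolding Y_def by blast
      with x ab have "(x, b) = (y, a)" by (intro inj_onD[OF inj]) auto
      with ab show False by simp
    qed
    then show "z \<in> X - Y" using x ab gX by blast
  qed
  then have "X - Y \<approx> X" by (rule eqpoll_if_between[OF _ Diff_subset slice[OF ab(2)]])
  with \<open>Y \<subseteq> X\<close> \<open>Y \<approx> X\<close> show ?thesis by blast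
qed

lemma combI:
  "\<lbrakk>\<Gamma> \<subseteq> \<A>; \<Delta> \<subseteq> \<A>; finite \<Gamma>; finite \<Delta>; \<Gamma> \<inter> \<Delta> = {}\<rbrakk> \<Longrightarrow> (L \<inter> \<Inter>\<Gamma>) - \<Union>\<Delta> \<in> comb L \<A>"
  unfolding comb_def by blast

lemma comb_subset: "C \<in> comb L \<A> \<Longrightarrow> C \<subseteq> L"
  unfolding comb_def by auto

lemma comb_lepoll:
  assumes "infinite \<A>"
  shows "comb L \<A> \<lesssim> \<A>"
proof -
  have "comb L \<A> \<subseteq> (\<lambda>(\<Gamma>, \<Delta>). (L \<inter> \<Inter>\<Gamma>) - \<Union>\<Delta>) ` (Fpow \<A> \<times> Fpow \<A>)"
    unfolding comb_def Fpow_def by fastforce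
  then have "comb L \<A> \<lesssim> Fpow \<A> \<times> Fpow \<A>" by (rule subset_image_lepoll)
  also have "\<dots> \<approx> \<A> \<times> \<A>" using eqpoll_Fpow[OF assms] by (intro times_eqpoll_cong)
  also have "\<dots> \<approx> \<A>" using assms by (rule infinite_times_self_eqpoll)
  finally show ?thesis .
qed

lemma comb_insert:
  assumes "C \<in> comb L (insert S \<A>)"
  obtains B where "B \<in> comb L \<A>" "C = B \<or> C = B \<inter> S \<or> C = B - S"
proof -
  obtain \<Gamma> \<Delta> where C: "C = (L \<inter> \<Inter>\<Gamma>) - \<Union>\<Delta>" "\<Gamma> \<subseteq> insert S \<A>" "\<Delta> \<subseteq> insert S \<A>"
      "finite \<Gamma>" "finite \<Delta>" "\<Gamma> \<inter> \<Delta> = {}"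
    using assms unfolding comb_def by blast
  define B where "B = (L \<inter> \<Inter>(\<Gamma> - {S})) - \<Union>(\<Delta> - {S})"
  have "B \<in> comb L \<A>" unfolding B_def by (rule combI) (use C in auto)
  moreover have "C = B \<or> C = B \<inter> S \<or> C = B - S"
  proof (cases "S \<in> \<Gamma>")
    case True
    with C(6) have "C = B \<inter> S" unfolding C(1) B_def by blast
    then show ?thesis by blast
  next
    case False
    then have "C = (if S \<in> \<Delta> then B - S else B)" unfolding C(1) B_def by auto
    then show ?thesis by presburger
  qed
  ultimately show thesis by (rule that)
qed

lemma splits_if_subset:
  assumes "splits L S X" "X \<subseteq> B" "B \<subseteq> L"
  shows "splits L S B"
  using assms eqpoll_if_between[of "X \<inter> S" "B \<inter> S" L] eqpoll_if_between[of "X - S" "B - S" L]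
  unfolding splits_def by blast

definition comb_atom :: "'a set \<Rightarrow> 'a set set \<Rightarrow> 'a set set \<Rightarrow> 'a set" where
  "comb_atom L \<A> \<Gamma> = (L \<inter> \<Inter>\<Gamma>) - \<Union>(\<A> - \<Gamma>)"

lemma comb_atom_in_comb: "\<lbrakk>finite \<A>; \<Gamma> \<subseteq> \<A>\<rbrakk> \<Longrightarrow> comb_atom L \<A> \<Gamma> \<in> comb L \<A>"
  unfolding comb_atom_def by (rule combI) (auto intro: finite_subset)

lemma comb_atoms_disjoint:
  "\<lbrakk>\<Gamma> \<subseteq> \<A>; \<Gamma>' \<subseteq> \<A>; \<Gamma> \<noteq> \<Gamma>'\<rbrakk> \<Longrightarrow> comb_atom L \<A> \<Gamma> \<inter> comb_atom L \<A> \<Gamma>' = {}"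
  unfolding comb_atom_def by blast

lemma comb_contains_atom:
  assumes "C \<in> comb L \<A>"
  obtains \<Gamma> where "\<Gamma> \<subseteq> \<A>" "comb_atom L \<A> \<Gamma> \<subseteq> C"
  using assms unfolding comb_def comb_atom_def by blast

lemma finite_independent_splittable:
  assumes "infinite L" "independent L \<A>" "finite \<A>"
  shows "\<exists>S \<in> full_subsets L. \<forall>B \<in> comb L \<A>. splits L S B"
proof -
  let ?atom = "comb_atom L \<A>"
  have atom_full: "?atom \<Gamma> \<approx> L" if "\<Gamma> \<subseteq> \<A>" for \<Gamma>
    using assms(2) comb_atom_in_comb[OF assms(3) that]
    unfolding independent_def full_subsets_def by blast
  have "\<forall>\<Gamma> \<in> Pow \<A>. \<exists>Y \<subseteq> ?atom \<Gamma>. Y \<approx> L \<and> ?atom \<Gamma> - Y \<approx> L"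
  proof
    fix \<Gamma> assume "\<Gamma> \<in> Pow \<A>"
    then have full: "?atom \<Gamma> \<approx> L" by (simp add: atom_full)
    then have "infinite (?atom \<Gamma>)" using assms(1) eqpoll_finite_iff by blast
    then obtain Y where "Y \<subseteq> ?atom \<Gamma>" "Y \<approx> ?atom \<Gamma>" "?atom \<Gamma> - Y \<approx> ?atom \<Gamma>"
      using infinite_split_eqpoll by blast
    with full show "\<exists>Y \<subseteq> ?atom \<Gamma>. Y \<approx> L \<and> ?atom \<Gamma> - Y \<approx> L"
      by (meson eqpoll_trans)
  qed
  then obtain h where h: "\<And>\<Gamma>. \<Gamma> \<subseteq> \<A> \<Longrightarrow> h \<Gamma> \<subseteq> ?atom \<Gamma> \<and> h \<Gamma> \<approx> L \<and> ?atom \<Gamma> - h \<Gamma> \<approx> L"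
    by (auto dest!: bchoice)
  have atom_subset: "?atom \<Gamma> \<subseteq> L" for \<Gamma> unfolding comb_atom_def by blast
  define S where "S = (\<Union>\<Gamma> \<in> Pow \<A>. h \<Gamma>)"
  \<comment> \<open>the atoms are disjoint, so \<open>S\<close> meets each atom exactly in its chosen half\<close>
  have atom_S: "?atom \<Gamma> \<inter> S = h \<Gamma>" if "\<Gamma> \<subseteq> \<A>" for \<Gamma>
  proof
    show "h \<Gamma> \<subseteq> ?atom \<Gamma> \<inter> S" using h[OF that] that unfolding S_def by blast
    show "?atom \<Gamma> \<inter> S \<subseteq> h \<Gamma>"
    proof
      fix x assume x: "x \<in> ?atom \<Gamma> \<inter> S"
      then obtain \<Gamma>' where "\<Gamma>' \<subseteq> \<A>" "x \<in> h \<Gamma>'" unfolding S_def by blast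
      moreover from this have "x \<in> ?atom \<Gamma>'" using h by blast
      ultimately show "x \<in> h \<Gamma>" using x comb_atoms_disjoint[OF that] by blast
    qed
  qed
  have atom_split: "splits L S (?atom \<Gamma>)" if "\<Gamma> \<subseteq> \<A>" for \<Gamma>
  proof -
    have "?atom \<Gamma> - S = ?atom \<Gamma> - h \<Gamma>" using atom_S[OF that] by blast
    then show ?thesis using h[OF that] atom_S[OF that] unfolding splits_def by simp
  qed
  have "S \<subseteq> L" unfolding S_def using h atom_subset by (meson PowD UN_least subset_trans)
  moreover have "h {} \<subseteq> S" unfolding S_def by blast
  ultimately have "S \<in> full_subsets L"
    using eqpoll_if_between h[of "{}"] unfolding full_subsets_def by blast
  moreover have "splits L S B" if B: "B \<in> comb L \<A>" for B
  proof -
    obtain \<Gamma> where "\<Gamma> \<subseteq> \<A>" "?atom \<Gamma> \<subseteq> B" using B by (rule comb_contains_atom)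
    then show ?thesis using atom_split splits_if_subset comb_subset[OF B] by blast
  qed
  ultimately show ?thesis by blast
qed

lemma comb_unsplittable:
  assumes "L \<noteq> {}" "maximal_independent L \<I>"
  shows "unsplittable L (comb L \<I>)"
proof -
  have ind: "independent L \<I>" using assms(2) by (simp add: maximal_independent_def)
  have False if S: "S \<in> full_subsets L" "\<forall>B \<in> comb L \<I>. splits L S B" for S
  proof (cases "S \<in> \<I>")
    case True
    have "L \<inter> S \<in> comb L \<I>" using combI[of "{S}" \<I> "{}" L] True by simp
    then have "L \<approx> L \<inter> S - S" using S unfolding splits_def by (blast intro: eqpoll_sym)
    moreover have "L \<inter> S - S = {}" by blast
    ultimately show False using assms(1) by simp
  next
    case False
    have "insert S \<I> \<subseteq> full_subsets L" using S(1) ind by (simp add: independent_def)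
    moreover have "\<not> independent L (insert S \<I>)"
      using assms(2) False unfolding maximal_independent_def by blast
    ultimately obtain C where C: "C \<in> comb L (insert S \<I>)" "C \<notin> full_subsets L"
      unfolding independent_def by blast
    from C(1) obtain B where B: "B \<in> comb L \<I>" and "C = B \<or> C = B \<inter> S \<or> C = B - S"
      by (rule comb_insert)
    moreover have "B \<approx> L"
      using ind B unfolding independent_def full_subsets_def by blast
    moreover have "B \<inter> S \<approx> L" "B - S \<approx> L"
      using S(2) B unfolding splits_def by blast+
    ultimately have "C \<approx> L" by blast
    then show False using C comb_subset unfolding full_subsets_def by blast
  qed
  then show ?thesis
    using ind unfolding unsplittable_def independent_def by blast
qed

lemma maximal_independent_infinite:
  assumes "infinite L" "maximal_independent L \<I>"
  shows "infinite \<I>"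
proof
  assume "finite \<I>"
  then show False
    using finite_independent_splittable[OF assms(1) _ \<open>finite \<I>\<close>]
      comb_unsplittable[OF _ assms(2)] assms
    unfolding maximal_independent_def unsplittable_def by blast
qed

theorem claim2p7:
  fixes L :: "'a set"
  assumes "uncountable L"
    and "cf_omega L"
    and "maximal_independent L \<I>"
  shows "\<exists>\<R>. unsplittable L \<R> \<and> \<R> \<lesssim> \<I>"
proof -
  have "infinite L" using assms(1) countable_finite by blast
  then have "unsplittable L (comb L \<I>)"
    using comb_unsplittable[OF _ assms(3)] by auto
  moreover have "comb L \<I> \<lesssim> \<I>"
    using comb_lepoll maximal_independent_infinite[OF \<open>infinite L\<close> assms(3)] .
  ultimately show ?thesis by blast
qed

end
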